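(* There is an absolute constant $C>0$ such that the following holds. Let $n\ge 1$, $d\ge 1$, and let $\mathcal{C}:\{\pm1\}^n\times\{\pm1\}^n\to\{\pm1\}$ be a deterministic two-party communication protocol in which at most $d$ bits are communicated. Let $h:\{\pm1\}^n\to[-1,1]$ be its XOR-fiber. Then $$L_{1,1}(h)=\sum_{i=1}^n\bigl|\hat h(\{i\})\bigr|\le C\sqrt d .$$
   Context: For $x,y\in\{\pm1\}^n$, $x\odot y$ denotes the entrywise product. The XOR-fiber of $\mathcal{C}$ is $h(z)=\mathbb{E}_{\mathbf{x},\mathbf{y}}[\mathcal{C}(\mathbf{x},\mathbf{y})\mid \mathbf{x}\odot\mathbf{y}=z]$, where $\mathbf{x},\mathbf{y}$ are independent and uniform on $\{\pm1\}^n$. Every $f:\{\pm1\}^n\to\mathbb{R}$ has a unique expansion $f(x)=\sum_{S\subseteq[n]}\hat f(S)\prod_{i\in S}x_i$ with $\hat f(S)=\mathbb{E}[f(\mathbf{x})\prod_{i\in S}\mathbf{x}_i]$ for uniform $\mathbf{x}$, and the level-$k$ Fourier growth is $L_{1,k}(f)=\sum_{|S|=k}|\hat f(S)|$. *)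

theory Defs
  imports Main "HOL-Analysis.Analysis"
begin

text \<open>Points of the Boolean cube {-1,1}^n, represented as real lists of length n
  (coordinate i is x ! i, for i < n).\<close>
definition cube :: "nat \<Rightarrow> real list set" where
  "cube n = {x. length x = n \<and> set x \<subseteq> {-1, 1}}"

definition emul :: "real list \<Rightarrow> real list \<Rightarrow> real list" where
  "emul x y = map2 (*) x y"

text \<open>Deterministic two-party protocol trees: at an Alice node Alice sends the bit
  f x (a function of her input only), at a Bob node Bob sends the bit g y.\<close>
datatype proto =
    Leaf bool
  | ANode "real list \<Rightarrow> bool" proto proto
  | BNode "real list \<Rightarrow> bool" proto proto

fun run :: "proto \<Rightarrow> real list \<Rightarrow> real list \<Rightarrow> real" where
  "run (Leaf b) x y = (if b then 1 else -1)"
| "run (ANode f l r) x y = (if f x then run l x y else run r x y)"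
| "run (BNode g l r) x y = (if g y then run l x y else run r x y)"

fun cost :: "proto \<Rightarrow> nat" where
  "cost (Leaf b) = 0"
| "cost (ANode f l r) = Suc (max (cost l) (cost r))"
| "cost (BNode g l r) = Suc (max (cost l) (cost r))"

text \<open>XOR-fiber: conditional expectation of C(x,y) given x \<odot> y = z,
  for x, y independent uniform on the cube.\<close>
definition xor_fiber :: "nat \<Rightarrow> (real list \<Rightarrow> real list \<Rightarrow> real) \<Rightarrow> real list \<Rightarrow> real" where
  "xor_fiber n C z =
     (let P = {(x, y). x \<in> cube n \<and> y \<in> cube n \<and> emul x y = z}
      in (\<Sum>(x, y)\<in>P. C x y) / real (card P))"

definition fourier :: "nat \<Rightarrow> (real list \<Rightarrow> real) \<Rightarrow> nat set \<Rightarrow> real" where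
  "fourier n f S = (\<Sum>x\<in>cube n. f x * (\<Prod>i\<in>S. x ! i)) / 2 ^ n"

definition L1k :: "nat \<Rightarrow> nat \<Rightarrow> (real list \<Rightarrow> real) \<Rightarrow> real" where
  "L1k n k f = (\<Sum>S\<in>{S. S \<subseteq> {0..<n} \<and> card S = k}. \<bar>fourier n f S\<bar>)"

end

theory Submission
  imports Defs "HOL-Probability.Hoeffding"
begin

text \<open>
  Choose signs s_i with s_i h({i}) = |h({i})|. Then L_{1,1}(h) is the average of
  C(x, y) sum_i s_i x_i y_i over the cube, which is an average over the leaves of the protocol
  tree; every leaf is a rectangle A x B on which C is constant, contributing +-<s mu_A, mu_B>
  where mu_A, mu_B are the centroids. The potential
    G(A, B) = <s mu_A, mu_B>^2 + Var_A <s mu_B, x> + Var_B <s mu_A, y>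
              - 32 (|mu_A|^2 + |mu_B|^2) + 64 (ln (2^n / |A|) + ln (2^n / |B|))
  vanishes on the whole cube and dominates the squared leaf contribution by the level-1
  inequality |mu_A|^2 <= 2 ln (2^n / |A|). Splitting one side into parts of relative sizes q and
  1 - q while the other side is clean (no linear form c has variance above 16 |c|^2 on it)
  increases G in expectation by at most 64 H(q) - 16 q (1 - q) |mu_A0 - mu_A1|^2, H the binary
  entropy. A communicated bit pays for 64 H(q) <= 64 ln 2; a side that is not clean is first split
  along a superlevel set of an offending linear form, where the negative term pays for the
  entropy. As the bound (G + 64 ln 2 k) / (2 t) + t / 2, with k the remaining communication, is
  preserved under averaging, the root gives L_{1,1}(h) <= 8 sqrt d for t = 8 sqrt d.
\<close>

section \<open>Averages over finite sets\<close>

definition avg :: "'a set \<Rightarrow> ('a \<Rightarrow> real) \<Rightarrow> real" where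
  "avg A f = (\<Sum>x\<in>A. f x) / card A"

definition var_on :: "'a set \<Rightarrow> ('a \<Rightarrow> real) \<Rightarrow> real" where
  "var_on A f = avg A (\<lambda>x. (f x - avg A f)^2)"

lemma avg_add: "avg A (\<lambda>x. f x + g x) = avg A f + avg A g"
  by (simp add: avg_def sum.distrib add_divide_distrib)

lemma avg_diff: "avg A (\<lambda>x. f x - g x) = avg A f - avg A g"
  by (simp add: avg_def sum_subtractf diff_divide_distrib)

lemma avg_uminus: "avg A (\<lambda>x. - f x) = - avg A f"
  by (simp add: avg_def sum_negf)

lemma avg_cmult: "avg A (\<lambda>x. c * f x) = c * avg A f"
  by (simp add: avg_def sum_distrib_left[symmetric])

lemma avg_divide: "avg A (\<lambda>x. f x / c) = avg A f / c"
  by (simp add: avg_def sum_divide_distrib[symmetric])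

lemma avg_const: "finite A \<Longrightarrow> A \<noteq> {} \<Longrightarrow> avg A (\<lambda>x. c) = c"
  by (simp add: avg_def)

lemma avg_sum: "avg A (\<lambda>x. \<Sum>i\<in>I. f i x) = (\<Sum>i\<in>I. avg A (f i))"
  by (simp add: avg_def sum.swap[of _ I] sum_divide_distrib)

lemma avg_cong: "(\<And>x. x \<in> A \<Longrightarrow> f x = g x) \<Longrightarrow> avg A f = avg A g"
  unfolding avg_def by (metis sum.cong)

lemma avg_swap: "avg A (\<lambda>x. avg B (f x)) = avg B (\<lambda>y. avg A (\<lambda>x. f x y))"
  by (simp add: avg_def sum_divide_distrib[symmetric] sum.swap[of _ A])

lemma avg_ge:
  assumes "finite A" "A \<noteq> {}" "\<And>x. x \<in> A \<Longrightarrow> w \<le> f x"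
  shows "w \<le> avg A f"
proof -
  have "(\<Sum>x\<in>A. w) \<le> (\<Sum>x\<in>A. f x)" using assms(3) by (rule sum_mono)
  thus ?thesis using assms(1,2) by (simp add: avg_def field_simps card_gt_0_iff)
qed

lemma card_fraction_complement:
  assumes "finite A" "A0 \<subseteq> A" "A \<noteq> {}"
  shows "1 - card A0 / card A = card (A - A0) / card A"
  using assms card_mono[OF assms(1,2)] card_Diff_subset[OF finite_subset[OF assms(2,1)] assms(2)]
  by (simp add: field_simps of_nat_diff)

lemma card_fraction_bounds:
  assumes "finite A" "A0 \<subseteq> A" "A0 \<noteq> {}" "A - A0 \<noteq> {}"
  shows "0 < card A0 / card A" "card A0 / card A < 1"
proof -
  have "0 < card A0" using assms(1-3) finite_subset by (auto simp: card_gt_0_iff)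
  moreover have "card A0 < card A"
    using assms by (metis Diff_eq_empty_iff psubsetI psubset_card_mono)
  ultimately show "0 < card A0 / card A" "card A0 / card A < 1" by auto
qed

lemma avg_split:
  assumes "finite A" "A0 \<subseteq> A"
  defines "q \<equiv> card A0 / card A"
  shows "avg A f = q * avg A0 f + (1 - q) * avg (A - A0) f"
proof (cases "A = {}")
  case False
  have part: "card X / card A * avg X f = (\<Sum>x\<in>X. f x) / card A" if "finite X" for X
    using that by (cases "X = {}") (auto simp: avg_def)
  have "1 - q = card (A - A0) / card A"
    unfolding q_def by (rule card_fraction_complement[OF assms(1,2) False])
  moreover have "avg A f = (\<Sum>x\<in>A0. f x) / card A + (\<Sum>x\<in>A - A0. f x) / card A"
    by (simp add: avg_def sum.subset_diff[OF assms(2,1)] add_divide_distrib)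
  ultimately show ?thesis
    using assms(1) finite_subset[OF assms(2,1)] unfolding q_def by (simp only: part finite_Diff)
qed (use assms(2) in \<open>simp add: avg_def\<close>)

lemma var_on_nonneg: "var_on A f \<ge> 0"
  unfolding var_on_def avg_def by (intro divide_nonneg_nonneg sum_nonneg) auto

lemma var_on_eq:
  assumes "finite A" "A \<noteq> {}"
  shows "var_on A f = avg A (\<lambda>x. (f x)^2) - (avg A f)^2"
proof -
  define m where "m = avg A f"
  have "var_on A f = avg A (\<lambda>x. (f x)^2 - 2 * m * f x + m^2)"
    unfolding var_on_def m_def by (intro avg_cong) (simp add: power2_diff)
  also have "\<dots> = avg A (\<lambda>x. (f x)^2) - m^2"
    by (simp add: avg_add avg_diff avg_cmult avg_const[OF assms] m_def power2_eq_square)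
  finally show ?thesis by (simp add: m_def)
qed

lemma var_on_mix:
  assumes "finite B" "B \<noteq> {}"
  shows "q * var_on B u0 + (1 - q) * var_on B u1
       = var_on B (\<lambda>y. q * u0 y + (1 - q) * u1 y) + q * (1 - q) * var_on B (\<lambda>y. u0 y - u1 y)"
proof -
  have sq: "avg B (\<lambda>y. (a * u0 y + b * u1 y)^2)
      = a^2 * avg B (\<lambda>y. (u0 y)^2) + 2 * a * b * avg B (\<lambda>y. u0 y * u1 y) + b^2 * avg B (\<lambda>y. (u1 y)^2)"
    for a b
  proof -
    have "avg B (\<lambda>y. (a * u0 y + b * u1 y)^2)
        = avg B (\<lambda>y. a^2 * (u0 y)^2 + 2 * a * b * (u0 y * u1 y) + b^2 * (u1 y)^2)"
      by (intro avg_cong) (simp add: power2_eq_square algebra_simps)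
    thus ?thesis by (simp only: avg_add avg_cmult)
  qed
  have mix: "var_on B (\<lambda>y. q * u0 y + (1 - q) * u1 y) = avg B (\<lambda>y. (q * u0 y + (1 - q) * u1 y)^2)
      - (q * avg B u0 + (1 - q) * avg B u1)^2"
    by (simp add: var_on_eq[OF assms] avg_add avg_cmult)
  have diff: "var_on B (\<lambda>y. u0 y - u1 y) = avg B (\<lambda>y. (1 * u0 y + (-1) * u1 y)^2)
      - (avg B u0 - avg B u1)^2"
    by (simp add: var_on_eq[OF assms] avg_diff)
  show ?thesis
    unfolding mix diff sq var_on_eq[OF assms] by (simp add: power2_eq_square algebra_simps)
qed

lemma exp_avg_le_avg_exp:
  assumes "finite A" "A \<noteq> {}"
  shows "exp (avg A u) \<le> avg A (\<lambda>x. exp (u x))"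
proof -
  define m where "m = avg A u"
  have "avg A (\<lambda>x. exp m * (1 + (u x - m))) \<le> avg A (\<lambda>x. exp (u x))"
    unfolding avg_def
  proof (intro divide_right_mono sum_mono)
    fix x
    have "exp m * (1 + (u x - m)) \<le> exp m * exp (u x - m)"
      by (intro mult_left_mono exp_ge_add_one_self) auto
    thus "exp m * (1 + (u x - m)) \<le> exp (u x)" by (simp add: exp_diff)
  qed simp
  moreover have "avg A (\<lambda>x. exp m * (1 + (u x - m))) = exp m"
    by (simp add: avg_cmult avg_add avg_diff avg_const[OF assms] m_def)
  ultimately show ?thesis by (simp add: m_def)
qed

section \<open>Binary entropy and superlevel splits\<close>

definition binary_entropy :: "real \<Rightarrow> real" where
  "binary_entropy q = - q * ln q - (1 - q) * ln (1 - q)"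

lemma binary_entropy_le_ln2:
  assumes "0 < q" "q < 1"
  shows "binary_entropy q \<le> ln 2"
proof -
  have ln_half_inverse: "ln (1 / (2 * x)) = - ln 2 - ln x" if "x > 0" for x :: real
    using that by (simp add: ln_div ln_mult)
  have "q * ln (1 / (2 * q)) + (1 - q) * ln (1 / (2 * (1 - q)))
      \<le> q * (1 / (2 * q) - 1) + (1 - q) * (1 / (2 * (1 - q)) - 1)"
    using assms by (intro add_mono mult_left_mono ln_le_minus_one) auto
  also have "\<dots> = 0" using assms by (simp add: field_simps)
  moreover have "0 < 1 - q" using assms(2) by simp
  ultimately show ?thesis
    unfolding ln_half_inverse[OF assms(1)] ln_half_inverse[OF \<open>0 < 1 - q\<close>]
    by (simp add: binary_entropy_def algebra_simps)
qed

lemma binary_entropy_le: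
  assumes "0 < q" "q < 1"
  shows "binary_entropy q \<le> q * (1 - ln q)"
proof -
  have "(1 - q) * ln (1 / (1 - q)) \<le> (1 - q) * (1 / (1 - q) - 1)"
    using assms by (intro mult_left_mono ln_le_minus_one) auto
  also have "\<dots> = q" using assms by (simp add: field_simps)
  finally show ?thesis
    using assms by (simp add: binary_entropy_def ln_div algebra_simps)
qed

lemma power_div_fact_le_exp:
  assumes "0 \<le> (x::real)"
  shows "x ^ n / fact n \<le> exp x"
proof -
  have "(\<Sum>k\<in>{n}. x ^ k / fact k) \<le> (\<Sum>k. x ^ k / fact k)"
    using summable_exp[of x] assms by (intro sum_le_suminf) (auto simp: field_simps)
  also have "\<dots> = exp x"
    using exp_converges[of x] by (simp add: sums_iff divide_inverse_commute)
  finally show ?thesis by simp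
qed

lemma sum_ln_ratio_le: "(\<Sum>k=1..N. 1 + ln (real N) - ln (real k)) \<le> 2 * real N"
proof (cases "N = 0")
  case False
  have "(\<Sum>k=1..N. ln (real k)) = ln (fact N)"
    unfolding fact_prod of_nat_prod by (subst ln_prod) auto
  moreover have "real N * ln (real N) - ln (fact N) = ln (real N ^ N / fact N)"
    using False by (simp add: ln_div ln_realpow)
  moreover have "ln (real N ^ N / fact N) \<le> real N"
    using power_div_fact_le_exp[of "real N" N] False
    by (subst ln_exp[symmetric], subst ln_le_cancel_iff) auto
  ultimately show ?thesis
    by (simp add: sum.distrib sum_subtractf distrib_left)
qed simp

lemma sum_rank_le:
  fixes W :: "'a \<Rightarrow> real" and g :: "nat \<Rightarrow> real"
  assumes "finite A" and antimono: "\<And>i j. 1 \<le> i \<Longrightarrow> i \<le> j \<Longrightarrow> g j \<le> g i"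
  shows "(\<Sum>x\<in>A. g (card {y\<in>A. W x \<le> W y})) \<le> (\<Sum>k=1..card A. g k)"
  using assms(1)
proof (induction "card A" arbitrary: A)
  case 0
  thus ?case by simp
next
  case (Suc m A)
  obtain x0 where x0: "x0 \<in> A" "W x0 = Min (W ` A)"
    using Min_in[of "W ` A"] Suc by fastforce
  define A' where "A' = A - {x0}"
  have fin': "finite A'" and card': "card A' = m"
    using Suc x0(1) by (simp_all add: A'_def)
  have "{y\<in>A. W x0 \<le> W y} = A" using x0 Suc.prems by auto
  hence rank_x0: "card {y\<in>A. W x0 \<le> W y} = Suc m" using Suc.hyps(2) by simp
  have rank_drop: "g (card {y\<in>A. W x \<le> W y}) \<le> g (card {y\<in>A'. W x \<le> W y})" if "x \<in> A'" for x
  proof (rule antimono)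
    show "1 \<le> card {y\<in>A'. W x \<le> W y}"
      using that fin' by (simp add: Suc_le_eq card_gt_0_iff) blast
    show "card {y\<in>A'. W x \<le> W y} \<le> card {y\<in>A. W x \<le> W y}"
      using Suc.prems by (intro card_mono) (auto simp: A'_def)
  qed
  have "(\<Sum>x\<in>A. g (card {y\<in>A. W x \<le> W y})) = g (Suc m) + (\<Sum>x\<in>A'. g (card {y\<in>A. W x \<le> W y}))"
    unfolding A'_def sum.remove[OF Suc.prems x0(1)] rank_x0 ..
  also have "\<dots> \<le> g (Suc m) + (\<Sum>x\<in>A'. g (card {y\<in>A'. W x \<le> W y}))"
    using rank_drop by (intro add_left_mono sum_mono) auto
  also have "\<dots> \<le> g (Suc m) + (\<Sum>k=1..m. g k)"
    using Suc.hyps(1)[OF card'[symmetric] fin'] card' by simp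
  also have "\<dots> = (\<Sum>k=1..Suc m. g k)" by simp
  finally show ?case using Suc.hyps(2) by simp
qed

lemma exists_large_value_of_rank:
  fixes W :: "'a \<Rightarrow> real"
  assumes "finite A" and big: "(\<Sum>x\<in>A. (max (W x) 0)^2) > 8 * card A"
  shows "\<exists>x\<in>A. W x > 0 \<and> 4 * (1 + ln (card A) - ln (card {y\<in>A. W x \<le> W y})) \<le> (W x)^2"
proof (rule ccontr)
  define g where "g k = 1 + ln (real (card A)) - ln (real k)" for k :: nat
  have g_ge_1: "g (card {y\<in>A. W x \<le> W y}) \<ge> 1" if "x \<in> A" for x
  proof -
    have "0 < card {y\<in>A. W x \<le> W y}" using that assms(1) by (auto simp: card_gt_0_iff)
    moreover have "card {y\<in>A. W x \<le> W y} \<le> card A" using assms(1) by (intro card_mono) auto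
    ultimately show ?thesis by (simp add: g_def)
  qed
  assume "\<not> ?thesis"
  hence "(max (W x) 0)^2 \<le> 4 * g (card {y\<in>A. W x \<le> W y})" if "x \<in> A" for x
    using g_ge_1[OF that] that by (cases "W x > 0") (auto simp: g_def max_def)
  hence "(\<Sum>x\<in>A. (max (W x) 0)^2) \<le> 4 * (\<Sum>x\<in>A. g (card {y\<in>A. W x \<le> W y}))"
    by (simp add: sum_distrib_left sum_mono)
  also have "\<dots> \<le> 4 * (\<Sum>k=1..card A. g k)"
    using sum_rank_le[OF assms(1), of g W] by (simp add: g_def)
  also have "\<dots> \<le> 8 * card A"
    using sum_ln_ratio_le[of "card A"] by (simp add: g_def)
  finally show False using big by simp
qed

lemma superlevel_gap:
  assumes "finite A" "A0 \<subseteq> A" "A0 \<noteq> {}" "A - A0 \<noteq> {}" "avg A W = 0"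
    and "0 \<le> w" "\<And>x. x \<in> A0 \<Longrightarrow> w \<le> W x"
  defines "q \<equiv> card A0 / card A"
  shows "q * w^2 \<le> q * (1 - q) * (avg A0 W - avg (A - A0) W)^2"
proof -
  define m0 m1 where "m0 = avg A0 W" and "m1 = avg (A - A0) W"
  have q: "0 < q" "q < 1" using card_fraction_bounds[OF assms(1-4)] by (simp_all add: q_def)
  have "w \<le> m0" unfolding m0_def using assms(1-3,7) finite_subset by (intro avg_ge) auto
  have "q * m0 + (1 - q) * m1 = 0"
    using avg_split[OF assms(1,2), of W] assms(5) by (simp add: q_def m0_def m1_def)
  hence gap: "m0 - m1 = m0 / (1 - q)" using q by (simp add: field_simps)
  have "q * (1 - q) * (m0 - m1)^2 = q * m0^2 / (1 - q)"
    unfolding gap using q by (simp add: power_divide power2_eq_square)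
  also have "\<dots> \<ge> q * m0^2"
    using q by (simp add: field_simps mult_left_le)
  also have "q * m0^2 \<ge> q * w^2"
    using q \<open>w \<le> m0\<close> assms(6) by (intro mult_left_mono power_mono) auto
  finally show ?thesis by (simp add: m0_def m1_def)
qed

lemma superlevel_split:
  fixes W :: "'a \<Rightarrow> real"
  assumes "finite A" "avg A W = 0" "(\<Sum>x\<in>A. (max (W x) 0)^2) > 8 * card A"
  shows "\<exists>A0\<subseteq>A. A0 \<noteq> {} \<and> A - A0 \<noteq> {} \<and>
    4 * binary_entropy (card A0 / card A)
      \<le> card A0 / card A * (1 - card A0 / card A) * (avg A0 W - avg (A - A0) W)^2"
proof -
  obtain x0 where x0: "x0 \<in> A" "W x0 > 0"
    and large: "4 * (1 + ln (card A) - ln (card {y\<in>A. W x0 \<le> W y})) \<le> (W x0)^2"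
    using exists_large_value_of_rank[OF assms(1,3)] by blast
  define A0 where "A0 = {y\<in>A. W x0 \<le> W y}"
  define q where "q = card A0 / card A"
  have A0: "A0 \<subseteq> A" "A0 \<noteq> {}" using x0 by (auto simp: A0_def)
  have "A - A0 \<noteq> {}"
  proof
    assume "A - A0 = {}"
    hence "\<forall>y\<in>A. W y > 0" using x0(2) by (auto simp: A0_def)
    hence "avg A W > 0" using assms(1) x0(1) by (auto simp: avg_def card_gt_0_iff intro!: sum_pos divide_pos_pos)
    thus False using assms(2) by simp
  qed
  have q: "0 < q" "q < 1"
    using card_fraction_bounds[OF assms(1) A0 \<open>A - A0 \<noteq> {}\<close>] by (simp_all add: q_def)
  have "4 * binary_entropy q \<le> 4 * (q * (1 - ln q))"
    using binary_entropy_le[OF q] by simp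
  also have "\<dots> = q * (4 * (1 + ln (card A) - ln (card A0)))"
    using q by (simp add: q_def ln_div)
  also have "\<dots> \<le> q * (W x0)^2"
    using large q by (intro mult_left_mono) (auto simp: A0_def)
  also have "\<dots> \<le> q * (1 - q) * (avg A0 W - avg (A - A0) W)^2"
    unfolding q_def by (rule superlevel_gap[OF assms(1) A0 \<open>A - A0 \<noteq> {}\<close> assms(2)])
      (use x0 in \<open>auto simp: A0_def\<close>)
  finally show ?thesis using A0 \<open>A - A0 \<noteq> {}\<close> unfolding q_def by blast
qed

lemma superlevel_split_abs:
  fixes W :: "'a \<Rightarrow> real"
  assumes "finite A" "avg A W = 0" "(\<Sum>x\<in>A. (W x)^2) > 16 * card A"
  shows "\<exists>A0\<subseteq>A. A0 \<noteq> {} \<and> A - A0 \<noteq> {} \<and>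
    4 * binary_entropy (card A0 / card A)
      \<le> card A0 / card A * (1 - card A0 / card A) * (avg A0 W - avg (A - A0) W)^2"
proof -
  have "(W x)^2 = (max (W x) 0)^2 + (max (- W x) 0)^2" for x
    by (cases "W x \<ge> 0") (auto simp: max_def)
  hence "(\<Sum>x\<in>A. (W x)^2) = (\<Sum>x\<in>A. (max (W x) 0)^2) + (\<Sum>x\<in>A. (max (- W x) 0)^2)"
    by (simp add: sum.distrib)
  hence "(\<Sum>x\<in>A. (max (W x) 0)^2) > 8 * card A \<or> (\<Sum>x\<in>A. (max (- W x) 0)^2) > 8 * card A"
    using assms(3) by linarith
  moreover have "(avg A0 (\<lambda>x. - W x) - avg (A - A0) (\<lambda>x. - W x))^2 = (avg A0 W - avg (A - A0) W)^2"
    for A0 by (simp add: avg_uminus power2_commute)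
  ultimately show ?thesis
    using superlevel_split[OF assms(1,2)] superlevel_split[OF assms(1), of "\<lambda>x. - W x"] assms(2)
    by (auto simp: avg_uminus)
qed

lemma superlevel_split_var:
  fixes f :: "'a \<Rightarrow> real"
  assumes "finite A" "var_on A f > 16 * v" "v > 0"
  shows "\<exists>A0\<subseteq>A. A0 \<noteq> {} \<and> A - A0 \<noteq> {} \<and>
    4 * v * binary_entropy (card A0 / card A)
      \<le> card A0 / card A * (1 - card A0 / card A) * (avg A0 f - avg (A - A0) f)^2"
proof -
  have "A \<noteq> {}" using assms(2,3) by (auto simp: var_on_def avg_def)
  define m where "m = avg A f"
  define W where "W x = (f x - m) / sqrt v" for x
  have avg_W: "avg A' W = (avg A' f - m) / sqrt v" if "finite A'" "A' \<noteq> {}" for A'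
    unfolding W_def by (simp add: avg_divide avg_diff avg_const[OF that])
  have "avg A W = 0" using avg_W[OF assms(1) \<open>A \<noteq> {}\<close>] by (simp add: m_def)
  have "(\<Sum>x\<in>A. (W x)^2) = card A * (var_on A f / v)"
    using \<open>A \<noteq> {}\<close> assms(1,3)
    by (simp add: W_def m_def var_on_def avg_def sum_divide_distrib[symmetric] power_divide)
  also have "\<dots> > real (card A) * 16"
    using assms(1-3) \<open>A \<noteq> {}\<close> by (intro mult_strict_left_mono) (simp_all add: pos_less_divide_eq card_gt_0_iff)
  finally obtain A0 where A0: "A0 \<subseteq> A" "A0 \<noteq> {}" "A - A0 \<noteq> {}"
    and gain: "4 * binary_entropy (card A0 / card A)
      \<le> card A0 / card A * (1 - card A0 / card A) * (avg A0 W - avg (A - A0) W)^2"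
    using superlevel_split_abs[OF assms(1) \<open>avg A W = 0\<close>] by (auto simp: mult.commute)
  have "finite A0" "finite (A - A0)" using assms(1) A0(1) finite_subset by auto
  hence gap: "(avg A0 W - avg (A - A0) W)^2 = (avg A0 f - avg (A - A0) f)^2 / v"
    using A0 assms(3) by (simp add: avg_W diff_divide_distrib[symmetric] power_divide)
  have "4 * v * binary_entropy (card A0 / card A)
      \<le> v * (card A0 / card A * (1 - card A0 / card A) * (avg A0 W - avg (A - A0) W)^2)"
    using mult_left_mono[OF gain, of v] assms(3) by (simp add: ac_simps)
  also have "\<dots> = card A0 / card A * (1 - card A0 / card A) * (avg A0 f - avg (A - A0) f)^2"
    unfolding gap using assms(3) by simp
  finally show ?thesis using A0 by blast
qed

section \<open>Linear forms on the Boolean cube\<close>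

definition linform :: "nat \<Rightarrow> (nat \<Rightarrow> real) \<Rightarrow> real list \<Rightarrow> real" where
  "linform n c x = (\<Sum>i<n. c i * x ! i)"

definition dot :: "nat \<Rightarrow> (nat \<Rightarrow> real) \<Rightarrow> (nat \<Rightarrow> real) \<Rightarrow> real" where
  "dot n u v = (\<Sum>i<n. u i * v i)"

definition centroid :: "real list set \<Rightarrow> nat \<Rightarrow> real" where
  "centroid A i = avg A (\<lambda>x. x ! i)"

definition clean :: "nat \<Rightarrow> real list set \<Rightarrow> bool" where
  "clean n A \<longleftrightarrow> (\<forall>c. var_on A (linform n c) \<le> 16 * dot n c c)"

definition deficiency :: "nat \<Rightarrow> real list set \<Rightarrow> real" where
  "deficiency n A = ln (2 ^ n / card A)"

lemma dot_self_nonneg: "dot n u u \<ge> 0"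
  unfolding dot_def by (intro sum_nonneg) auto

lemma avg_linform: "avg A (linform n c) = dot n c (centroid A)"
  unfolding linform_def dot_def centroid_def by (simp add: avg_sum avg_cmult)

lemma centroid_split:
  assumes "finite A" "A0 \<subseteq> A"
  defines "q \<equiv> card A0 / card A"
  shows "centroid A i = q * centroid A0 i + (1 - q) * centroid (A - A0) i"
  unfolding centroid_def q_def by (rule avg_split[OF assms(1,2)])

lemma finite_cube: "finite (cube n)"
proof -
  have "cube n = {xs. set xs \<subseteq> {-1, 1} \<and> length xs = n}" by (auto simp: cube_def)
  thus ?thesis using finite_lists_length_eq[of "{-1, 1::real}" n] by simp
qed

lemma finite_subset_cube: "A \<subseteq> cube n \<Longrightarrow> finite A"
  using finite_cube finite_subset by blast

lemma cube_nth: "x \<in> cube n \<Longrightarrow> i < n \<Longrightarrow> x ! i = 1 \<or> x ! i = -1"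
  unfolding cube_def using nth_mem by fastforce

lemma cube_Suc: "cube (Suc n) = (\<lambda>(c, xs). c # xs) ` ({-1, 1} \<times> cube n)"
proof
  show "cube (Suc n) \<subseteq> (\<lambda>(c, xs). c # xs) ` ({-1, 1} \<times> cube n)"
  proof
    fix x assume "x \<in> cube (Suc n)"
    then obtain c xs where "x = c # xs" "length xs = n" "c \<in> {-1, 1}" "set xs \<subseteq> {-1, 1}"
      unfolding cube_def by (cases x) auto
    thus "x \<in> (\<lambda>(c, xs). c # xs) ` ({-1, 1} \<times> cube n)"
      by (auto simp: cube_def image_iff)
  qed
qed (auto simp: cube_def)

lemma sum_cube_prod:
  fixes f :: "nat \<Rightarrow> real \<Rightarrow> real"
  shows "(\<Sum>x\<in>cube n. \<Prod>j<n. f j (x ! j)) = (\<Prod>j<n. f j 1 + f j (-1))"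
proof (induction n arbitrary: f)
  case 0
  have "cube 0 = {[]}" by (auto simp: cube_def)
  thus ?case by simp
next
  case (Suc n)
  have inj: "inj_on (\<lambda>(c, xs). c # xs) ({-1::real, 1} \<times> cube n)" by (auto simp: inj_on_def)
  have "(\<Sum>x\<in>cube (Suc n). \<Prod>j<Suc n. f j (x ! j))
      = (\<Sum>p\<in>{-1::real, 1} \<times> cube n. \<Prod>j<Suc n. f j ((fst p # snd p) ! j))"
    unfolding cube_Suc by (subst sum.reindex[OF inj]) (simp add: case_prod_beta)
  also have "\<dots> = (\<Sum>(c, xs)\<in>{-1::real, 1} \<times> cube n. f 0 c * (\<Prod>j<n. f (Suc j) (xs ! j)))"
    by (rule sum.cong) (auto simp only: prod.lessThan_Suc_shift, auto)
  also have "\<dots> = (\<Sum>c\<in>{-1::real, 1}. f 0 c * (\<Sum>xs\<in>cube n. \<Prod>j<n. f (Suc j) (xs ! j)))"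
    by (simp add: sum.cartesian_product[symmetric] sum_distrib_left)
  also have "\<dots> = (\<Sum>c\<in>{-1::real, 1}. f 0 c * (\<Prod>j<n. f (Suc j) 1 + f (Suc j) (-1)))"
    using Suc.IH[of "\<lambda>j. f (Suc j)"] by simp
  also have "\<dots> = (\<Prod>j<Suc n. f j 1 + f j (-1))"
    by (simp only: prod.lessThan_Suc_shift) (simp add: algebra_simps)
  finally show ?case .
qed

lemma card_cube: "card (cube n) = 2 ^ n"
  using sum_cube_prod[of "\<lambda>_ _. 1" n] by (simp flip: of_nat_power)

lemma cube_nonempty: "cube n \<noteq> {}"
  using card_cube[of n] by auto

lemma sum_cube_nth: "i < n \<Longrightarrow> (\<Sum>x\<in>cube n. x ! i) = 0"
  using sum_cube_prod[of "\<lambda>j v. if j = i then v else 1" n]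
  by (simp add: prod.If_cases lessThan_def Collect_conj_eq prod_zero_iff)

lemma sum_cube_nth_mult:
  assumes "i < n" "j < n"
  shows "(\<Sum>x\<in>cube n. x ! i * x ! j) = (if i = j then 2 ^ n else 0)"
proof (cases "i = j")
  case True
  have "x ! i * x ! i = 1" if "x \<in> cube n" for x using cube_nth[OF that assms(1)] by auto
  thus ?thesis using True by (simp add: card_cube)
next
  case False
  have "(\<Sum>x\<in>cube n. x ! i * x ! j)
      = (\<Sum>x\<in>cube n. \<Prod>k<n. (if k = i then x ! k else 1) * (if k = j then x ! k else 1))"
    using assms by (intro sum.cong refl) (simp add: prod.distrib prod.delta')
  also have "\<dots> = (\<Prod>k<n. (if k = i then 1 else 1) * (if k = j then 1 else 1)
      + (if k = i then -1 else 1) * (if k = j then -1 else 1 :: real))"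
    by (rule sum_cube_prod)
  also have "\<dots> = 0"
    using assms False by (intro prod_zero) auto
  finally show ?thesis using False by simp
qed

lemma centroid_cube: "i < n \<Longrightarrow> centroid (cube n) i = 0"
  by (simp add: centroid_def avg_def sum_cube_nth)

lemma avg_cube_linform_sq: "avg (cube n) (\<lambda>x. (linform n c x)^2) = dot n c c"
proof -
  have "(\<Sum>x\<in>cube n. (linform n c x)^2) = (\<Sum>i<n. \<Sum>j<n. c i * c j * (\<Sum>x\<in>cube n. x ! i * x ! j))"
    unfolding linform_def power2_eq_square sum_product
    by (simp add: sum.swap[of _ "cube n"] sum_distrib_left algebra_simps)
  also have "\<dots> = (\<Sum>i<n. c i * c i * 2 ^ n)"
    by (simp add: sum_cube_nth_mult if_distrib[of "(*) _"] cong: if_cong)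
  finally show ?thesis by (simp add: avg_def card_cube dot_def sum_distrib_right[symmetric])
qed

lemma clean_cube: "clean n (cube n)"
  unfolding clean_def
proof
  fix c
  have "var_on (cube n) (linform n c) \<le> avg (cube n) (\<lambda>x. (linform n c x)^2)"
    by (simp add: var_on_eq[OF finite_cube cube_nonempty])
  thus "var_on (cube n) (linform n c) \<le> 16 * dot n c c"
    using dot_self_nonneg[of n c] by (simp add: avg_cube_linform_sq)
qed

lemma exp_plus_exp_uminus_le: "exp u + exp (- u) \<le> 2 * exp (u^2 / 2 :: real)"
proof -
  have nonneg_case: "exp w + exp (- w) \<le> 2 * exp (w^2 / 2)" if "w \<ge> 0" for w :: real
  proof -
    have "ln (1 + (1 / 2) * (exp (2 * w) - 1)) - w \<le> (2 * w)^2 / 8"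
      using Hoeffdings_lemma_aux[of "2 * w" "1 / 2"] that by simp
    hence "ln ((1 + exp (2 * w)) / 2) \<le> w^2 / 2 + w"
      by (simp add: power2_eq_square field_simps)
    hence "exp (ln ((1 + exp (2 * w)) / 2)) \<le> exp (w^2 / 2 + w)"
      by simp
    hence "(1 + exp (2 * w)) / 2 \<le> exp (w^2 / 2 + w)"
      by (simp add: add_pos_pos)
    hence "(1 + exp (2 * w)) / 2 * exp (- w) \<le> exp (w^2 / 2 + w) * exp (- w)"
      by simp
    thus ?thesis by (simp add: algebra_simps flip: exp_add)
  qed
  show ?thesis
    using nonneg_case[of u] nonneg_case[of "- u"] by (cases "u \<ge> 0") auto
qed

lemma level1_inequality:
  assumes "A \<subseteq> cube n" "A \<noteq> {}"
  shows "dot n (centroid A) (centroid A) \<le> 2 * deficiency n A"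
proof -
  define a where "a = centroid A"
  define N where "N = dot n a a"
  have fin: "finite A" using assms(1) by (rule finite_subset_cube)
  have pos: "0 < real (card A)" using fin assms(2) by (simp add: card_gt_0_iff)
  have "exp N \<le> avg A (\<lambda>x. exp (linform n a x))"
    using exp_avg_le_avg_exp[OF fin assms(2), of "linform n a"] by (simp add: avg_linform N_def a_def)
  also have "\<dots> \<le> (\<Sum>x\<in>cube n. exp (linform n a x)) / card A"
    unfolding avg_def by (intro divide_right_mono sum_mono2[OF finite_cube assms(1)]) auto
  also have "(\<Sum>x\<in>cube n. exp (linform n a x)) = (\<Prod>j<n. exp (a j * 1) + exp (a j * (-1)))"
    using sum_cube_prod[of "\<lambda>j v. exp (a j * v)" n] by (simp add: linform_def exp_sum)
  also have "\<dots> \<le> (\<Prod>j<n. 2 * exp ((a j)^2 / 2))"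
    by (intro prod_mono) (auto intro: add_nonneg_nonneg simp: exp_plus_exp_uminus_le)
  also have "\<dots> = 2 ^ n * exp (N / 2)"
    by (simp add: N_def dot_def prod.distrib exp_sum sum_divide_distrib power2_eq_square)
  finally have "exp (N / 2) * exp (N / 2) \<le> 2 ^ n * exp (N / 2) / card A"
    using pos by (simp add: divide_right_mono flip: exp_add)
  hence "exp (N / 2) \<le> 2 ^ n / card A"
    using pos by (simp add: field_simps)
  hence "N / 2 \<le> ln (2 ^ n / card A)"
    using pos by (subst ln_ge_iff) auto
  thus ?thesis by (simp add: deficiency_def N_def a_def)
qed

section \<open>Level-1 coefficients of the XOR-fiber\<close>

lemma emul_nth: "i < length x \<Longrightarrow> i < length y \<Longrightarrow> emul x y ! i = x ! i * y ! i"
  by (simp add: emul_def)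

lemma emul_cube:
  assumes "x \<in> cube n" "y \<in> cube n"
  shows "emul x y \<in> cube n"
proof -
  have "length x = n" "length y = n" using assms by (auto simp: cube_def)
  thus ?thesis
    using cube_nth[OF assms(1)] cube_nth[OF assms(2)] by (fastforce simp: cube_def emul_def set_conv_nth)
qed

lemma emul_emul_cube: "x \<in> cube n \<Longrightarrow> z \<in> cube n \<Longrightarrow> emul x (emul x z) = z"
proof (rule nth_equalityI)
  assume x: "x \<in> cube n" and z: "z \<in> cube n"
  hence len: "length x = n" "length z = n" by (auto simp: cube_def)
  thus "length (emul x (emul x z)) = length z" by (simp add: emul_def)
  fix i assume "i < length (emul x (emul x z))"
  hence "i < n" using len by (simp add: emul_def)
  thus "emul x (emul x z) ! i = z ! i"
    using cube_nth[OF x \<open>i < n\<close>] len by (auto simp: emul_def)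
qed

lemma bij_betw_emul_cube: "x \<in> cube n \<Longrightarrow> bij_betw (emul x) (cube n) (cube n)"
  by (rule bij_betw_byWitness[where f'="emul x"]) (auto simp: emul_emul_cube emul_cube)

lemma xor_fiber_cube:
  assumes "z \<in> cube n"
  shows "xor_fiber n C z = avg (cube n) (\<lambda>x. C x (emul x z))"
proof -
  have fiber: "{(x, y). x \<in> cube n \<and> y \<in> cube n \<and> emul x y = z} = (\<lambda>x. (x, emul x z)) ` cube n"
    using assms by (auto simp: emul_emul_cube emul_cube image_iff)
  have inj: "inj_on (\<lambda>x. (x, emul x z)) (cube n)" by (auto simp: inj_on_def)
  show ?thesis
    unfolding xor_fiber_def Let_def fiber avg_def
    by (simp add: sum.reindex[OF inj] card_image[OF inj])
qed

lemma fourier_xor_fiber_singleton: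
  assumes "i < n"
  shows "fourier n (xor_fiber n C) {i} = avg (cube n) (\<lambda>x. avg (cube n) (\<lambda>y. C x y * (x ! i * y ! i)))"
proof -
  have "avg (cube n) (\<lambda>z. C x (emul x z) * z ! i) = avg (cube n) (\<lambda>y. C x y * (x ! i * y ! i))"
    if x: "x \<in> cube n" for x
  proof -
    have "(\<Sum>z\<in>cube n. C x (emul x z) * z ! i) = (\<Sum>y\<in>cube n. C x (emul x (emul x y)) * emul x y ! i)"
      using sum.reindex_bij_betw[OF bij_betw_emul_cube[OF x], of "\<lambda>z. C x (emul x z) * z ! i"] by simp
    also have "\<dots> = (\<Sum>y\<in>cube n. C x y * (x ! i * y ! i))"
      using x assms by (intro sum.cong refl) (auto simp: emul_emul_cube emul_nth cube_def)
    finally show ?thesis by (simp add: avg_def)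
  qed
  hence "avg (cube n) (\<lambda>x. avg (cube n) (\<lambda>z. C x (emul x z) * z ! i))
      = avg (cube n) (\<lambda>x. avg (cube n) (\<lambda>y. C x y * (x ! i * y ! i)))"
    by (rule avg_cong)
  moreover have "avg (cube n) (\<lambda>z. xor_fiber n C z * z ! i)
      = avg (cube n) (\<lambda>z. avg (cube n) (\<lambda>x. C x (emul x z) * z ! i))"
    by (intro avg_cong) (simp add: xor_fiber_cube mult.commute avg_cmult[symmetric])
  moreover have "fourier n (xor_fiber n C) {i} = avg (cube n) (\<lambda>z. xor_fiber n C z * z ! i)"
    by (simp add: fourier_def avg_def card_cube)
  ultimately show ?thesis
    by (simp only: avg_swap[of "cube n" "cube n" "\<lambda>z x. C x (emul x z) * z ! i"])
qed

lemma L1k_one: "L1k n 1 f = (\<Sum>i<n. \<bar>fourier n f {i}\<bar>)"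
proof -
  have "{S. S \<subseteq> {0..<n} \<and> card S = 1} = (\<lambda>i. {i}) ` {..<n}"
    by (auto simp: card_1_singleton_iff image_iff lessThan_atLeast0)
  moreover have "inj_on (\<lambda>i. {i}) {..<n}" by (auto simp: inj_on_def)
  ultimately show ?thesis by (simp add: L1k_def sum.reindex)
qed

definition level1_corr ::
    "nat \<Rightarrow> (nat \<Rightarrow> real) \<Rightarrow> (real list \<Rightarrow> real list \<Rightarrow> real) \<Rightarrow> real list set \<Rightarrow> real list set \<Rightarrow> real" where
  "level1_corr n s C A B = avg A (\<lambda>x. avg B (\<lambda>y. C x y * (\<Sum>i<n. s i * x ! i * y ! i)))"

lemma L1k_xor_fiber_eq_level1_corr:
  "\<exists>s. (\<forall>i<n. (s i)^2 = 1) \<and> L1k n 1 (xor_fiber n C) = level1_corr n s C (cube n) (cube n)"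
proof (intro exI conjI allI impI)
  define F where "F i = avg (cube n) (\<lambda>x. avg (cube n) (\<lambda>y. C x y * (x ! i * y ! i)))" for i
  define s where "s i = (if F i \<ge> 0 then 1 else -1 :: real)" for i
  show "(s i)^2 = 1" for i by (simp add: s_def)
  have "level1_corr n s C (cube n) (cube n) = (\<Sum>i<n. s i * F i)"
    unfolding level1_corr_def F_def by (simp add: sum_distrib_left avg_sum avg_cmult ac_simps)
  also have "\<dots> = L1k n 1 (xor_fiber n C)"
    unfolding L1k_one by (intro sum.cong refl) (simp add: fourier_xor_fiber_singleton F_def s_def)
  finally show "L1k n 1 (xor_fiber n C) = level1_corr n s C (cube n) (cube n)" ..
qed

section \<open>The potential of a rectangle\<close>

definition centroid_corr :: "nat \<Rightarrow> (nat \<Rightarrow> real) \<Rightarrow> real list set \<Rightarrow> real list set \<Rightarrow> real" where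
  "centroid_corr n s A B = (\<Sum>i<n. s i * centroid A i * centroid B i)"

definition cross_var :: "nat \<Rightarrow> (nat \<Rightarrow> real) \<Rightarrow> real list set \<Rightarrow> real list set \<Rightarrow> real" where
  "cross_var n s A B = var_on A (linform n (\<lambda>i. s i * centroid B i))"

definition potential :: "nat \<Rightarrow> (nat \<Rightarrow> real) \<Rightarrow> real list set \<Rightarrow> real list set \<Rightarrow> real" where
  "potential n s A B = (centroid_corr n s A B)^2 + cross_var n s A B + cross_var n s B A
     - 32 * (dot n (centroid A) (centroid A) + dot n (centroid B) (centroid B))
     + 64 * (deficiency n A + deficiency n B)"

lemma potential_commute: "potential n s A B = potential n s B A"
  unfolding potential_def centroid_corr_def by (simp add: ac_simps)

lemma linform_lincomb:
  "linform n (\<lambda>i. a * u i + b * v i) x = a * linform n u x + b * linform n v x"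
  unfolding linform_def by (simp add: sum.distrib sum_distrib_left algebra_simps)

lemma corr_sq_plus_cross_var:
  assumes "finite A" "A \<noteq> {}"
  shows "(centroid_corr n s A B)^2 + cross_var n s A B
       = avg A (\<lambda>x. (linform n (\<lambda>i. s i * centroid B i) x)^2)"
proof -
  have "avg A (linform n (\<lambda>i. s i * centroid B i)) = centroid_corr n s A B"
    unfolding avg_linform dot_def centroid_corr_def by (simp add: ac_simps)
  thus ?thesis unfolding cross_var_def var_on_eq[OF assms] by simp
qed

definition budget :: "nat \<Rightarrow> (nat \<Rightarrow> real) \<Rightarrow> real \<Rightarrow> real list set \<Rightarrow> real list set \<Rightarrow> real \<Rightarrow> real" where
  "budget n s t A B k = (potential n s A B + 64 * ln 2 * k) / (2 * t) + t / 2"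

lemma budget_commute: "budget n s t A B k = budget n s t B A k"
  unfolding budget_def by (simp add: potential_commute)

lemma budget_mono: "t > 0 \<Longrightarrow> k \<le> k' \<Longrightarrow> budget n s t A B k \<le> budget n s t A B k'"
  unfolding budget_def by (intro add_right_mono divide_right_mono) auto

lemma level1_corr_swap: "level1_corr n s C A B = level1_corr n s (\<lambda>y x. C x y) B A"
  unfolding level1_corr_def by (subst avg_swap) (intro avg_cong, simp add: ac_simps)

lemma level1_corr_cong:
  "(\<And>x y. x \<in> A \<Longrightarrow> y \<in> B \<Longrightarrow> C x y = C' x y) \<Longrightarrow> level1_corr n s C A B = level1_corr n s C' A B"
  unfolding level1_corr_def by (intro avg_cong) simp

lemma level1_corr_split:
  assumes "finite A" "A0 \<subseteq> A"
  defines "q \<equiv> card A0 / card A"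
  shows "level1_corr n s C A B = q * level1_corr n s C A0 B + (1 - q) * level1_corr n s C (A - A0) B"
  unfolding level1_corr_def q_def by (rule avg_split[OF assms(1,2)])

lemma level1_corr_const: "level1_corr n s (\<lambda>_ _. c) A B = c * centroid_corr n s A B"
proof -
  have "avg B (\<lambda>y. c * (\<Sum>i<n. s i * x ! i * y ! i)) = c * (\<Sum>i<n. (s i * centroid B i) * x ! i)" for x
    by (simp only: avg_cmult avg_sum centroid_def) (simp add: ac_simps)
  hence "level1_corr n s (\<lambda>_ _. c) A B = avg A (\<lambda>x. c * (\<Sum>i<n. (s i * centroid B i) * x ! i))"
    unfolding level1_corr_def by simp
  also have "\<dots> = c * centroid_corr n s A B"
    by (simp only: avg_cmult avg_sum centroid_def centroid_corr_def) (simp add: ac_simps)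
  finally show ?thesis .
qed

context
  fixes n :: nat and A A0 :: "real list set"
  assumes fin: "finite A" and sub: "A0 \<subseteq> A" and ne: "A0 \<noteq> {}" "A - A0 \<noteq> {}"
begin

lemma dot_centroid_split:
  defines "q \<equiv> card A0 / card A" and "D \<equiv> \<lambda>i. centroid A0 i - centroid (A - A0) i"
  shows "q * dot n (centroid A0) (centroid A0) + (1 - q) * dot n (centroid (A - A0)) (centroid (A - A0))
       = dot n (centroid A) (centroid A) + q * (1 - q) * dot n D D"
  unfolding dot_def centroid_split[OF fin sub, folded q_def] D_def
  by (simp add: sum_distrib_left sum.distrib[symmetric] power2_eq_square algebra_simps)

lemma deficiency_split:
  defines "q \<equiv> card A0 / card A"
  shows "q * deficiency n A0 + (1 - q) * deficiency n (A - A0) = deficiency n A + binary_entropy q"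
proof -
  have pos: "0 < card A0" "0 < card (A - A0)" "0 < card A"
    using ne fin sub finite_subset by (auto simp: card_gt_0_iff)
  have split: "deficiency n X = deficiency n A - ln (card X / card A)" if "0 < card X" for X
    using that pos by (simp add: deficiency_def ln_div)
  have compl: "1 - q = card (A - A0) / card A"
    unfolding q_def using fin sub ne by (intro card_fraction_complement) auto
  show ?thesis
    unfolding split[OF pos(1)] split[OF pos(2)] q_def[symmetric] compl[symmetric]
    by (simp add: binary_entropy_def algebra_simps)
qed

lemma cross_var_split:
  assumes B: "finite B" "B \<noteq> {}" "clean n B" and s: "\<forall>i<n. (s i)^2 = 1"
  defines "q \<equiv> card A0 / card A" and "D \<equiv> \<lambda>i. centroid A0 i - centroid (A - A0) i"
  shows "q * cross_var n s B A0 + (1 - q) * cross_var n s B (A - A0)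
       \<le> cross_var n s B A + 16 * (q * (1 - q) * dot n D D)"
proof -
  define lf where "lf X = linform n (\<lambda>i. s i * centroid X i)" for X
  have q: "0 \<le> q" "q \<le> 1" using card_fraction_bounds[OF fin sub ne] by (simp_all add: q_def)
  have mix: "(\<lambda>y. q * lf A0 y + (1 - q) * lf (A - A0) y) = lf A"
    unfolding lf_def linform_lincomb[symmetric] centroid_split[OF fin sub, folded q_def]
    by (simp add: algebra_simps)
  have diff: "(\<lambda>y. lf A0 y - lf (A - A0) y) = linform n (\<lambda>i. s i * D i)"
    unfolding lf_def D_def linform_def by (simp add: sum_subtractf algebra_simps)
  have "dot n (\<lambda>i. s i * D i) (\<lambda>i. s i * D i) = dot n D D"
    unfolding dot_def using s by (intro sum.cong refl) (simp add: power2_eq_square algebra_simps)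
  hence "var_on B (\<lambda>y. lf A0 y - lf (A - A0) y) \<le> 16 * dot n D D"
    using B(3) unfolding diff clean_def by metis
  hence "q * (1 - q) * var_on B (\<lambda>y. lf A0 y - lf (A - A0) y) \<le> q * (1 - q) * (16 * dot n D D)"
    using q by (intro mult_left_mono) auto
  thus ?thesis
    using var_on_mix[OF B(1,2), of q "lf A0" "lf (A - A0)"]
    unfolding cross_var_def lf_def[symmetric] mix by simp
qed

lemma potential_split:
  assumes B: "finite B" "B \<noteq> {}" "clean n B" and s: "\<forall>i<n. (s i)^2 = 1"
  defines "q \<equiv> card A0 / card A" and "D \<equiv> \<lambda>i. centroid A0 i - centroid (A - A0) i"
  shows "q * potential n s A0 B + (1 - q) * potential n s (A - A0) B
       \<le> potential n s A B - 16 * (q * (1 - q) * dot n D D) + 64 * binary_entropy q"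
proof -
  have fin': "finite A0" "finite (A - A0)" using fin sub finite_subset by auto
  have "A \<noteq> {}" using sub ne by auto
  have "(centroid_corr n s A B)^2 + cross_var n s A B
      = avg A (\<lambda>x. (linform n (\<lambda>i. s i * centroid B i) x)^2)"
    by (rule corr_sq_plus_cross_var[OF fin \<open>A \<noteq> {}\<close>])
  also have "\<dots> = q * avg A0 (\<lambda>x. (linform n (\<lambda>i. s i * centroid B i) x)^2)
      + (1 - q) * avg (A - A0) (\<lambda>x. (linform n (\<lambda>i. s i * centroid B i) x)^2)"
    unfolding q_def by (rule avg_split[OF fin sub])
  also have "\<dots> = q * ((centroid_corr n s A0 B)^2 + cross_var n s A0 B)
      + (1 - q) * ((centroid_corr n s (A - A0) B)^2 + cross_var n s (A - A0) B)"
    by (simp only: corr_sq_plus_cross_var[OF fin'(1) ne(1)] corr_sq_plus_cross_var[OF fin'(2) ne(2)])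
  finally show ?thesis
    using cross_var_split[OF B s, folded q_def D_def] dot_centroid_split[folded q_def D_def]
      deficiency_split[folded q_def]
    unfolding potential_def by (simp add: algebra_simps)
qed

lemma budget_split:
  assumes B: "finite B" "B \<noteq> {}" "clean n B" and s: "\<forall>i<n. (s i)^2 = 1" and t: "t > 0"
    and V0: "\<bar>level1_corr n s C A0 B\<bar> \<le> budget n s t A0 B k0"
    and V1: "\<bar>level1_corr n s C (A - A0) B\<bar> \<le> budget n s t (A - A0) B k1"
  defines "q \<equiv> card A0 / card A" and "D \<equiv> \<lambda>i. centroid A0 i - centroid (A - A0) i"
  assumes cost: "binary_entropy q + ln 2 * (q * k0 + (1 - q) * k1) \<le> ln 2 * k + q * (1 - q) * dot n D D / 4"
  shows "\<bar>level1_corr n s C A B\<bar> \<le> budget n s t A B k"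
proof -
  have q: "0 < q" "q < 1" using card_fraction_bounds[OF fin sub ne] by (simp_all add: q_def)
  have "\<bar>level1_corr n s C A B\<bar> \<le> \<bar>q * level1_corr n s C A0 B\<bar> + \<bar>(1 - q) * level1_corr n s C (A - A0) B\<bar>"
    unfolding level1_corr_split[OF fin sub, folded q_def] by (rule abs_triangle_ineq)
  also have "\<dots> = q * \<bar>level1_corr n s C A0 B\<bar> + (1 - q) * \<bar>level1_corr n s C (A - A0) B\<bar>"
    using q by (simp add: abs_mult)
  also have "\<dots> \<le> q * budget n s t A0 B k0 + (1 - q) * budget n s t (A - A0) B k1"
    using q V0 V1 by (intro add_mono mult_left_mono) auto
  also have "\<dots> = (q * potential n s A0 B + (1 - q) * potential n s (A - A0) B
      + 64 * ln 2 * (q * k0 + (1 - q) * k1)) / (2 * t) + t / 2"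
    using t by (simp add: budget_def field_simps)
  also have "\<dots> \<le> budget n s t A B k"
    unfolding budget_def using potential_split[OF B s, folded q_def D_def] cost t
    by (intro add_right_mono divide_right_mono) auto
  finally show ?thesis .
qed

end

lemma potential_ge_corr_sq:
  assumes "A \<subseteq> cube n" "B \<subseteq> cube n" "A \<noteq> {}" "B \<noteq> {}"
  shows "(centroid_corr n s A B)^2 \<le> potential n s A B"
  using level1_inequality[OF assms(1,3)] level1_inequality[OF assms(2,4)]
    var_on_nonneg[of A "linform n (\<lambda>i. s i * centroid B i)"]
    var_on_nonneg[of B "linform n (\<lambda>i. s i * centroid A i)"]
  unfolding potential_def cross_var_def by (smt (verit))

lemma abs_le_amgm: "t > 0 \<Longrightarrow> \<bar>z\<bar> \<le> z^2 / (2 * t) + t / (2::real)"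
  using sum_squares_ge_zero[of "\<bar>z\<bar> - t" 0]
  by (simp add: field_simps power2_eq_square)

lemma budget_leaf:
  assumes "A \<subseteq> cube n" "B \<subseteq> cube n" "A \<noteq> {}" "B \<noteq> {}" "\<bar>c\<bar> \<le> 1" "t > 0"
  shows "\<bar>level1_corr n s (\<lambda>_ _. c) A B\<bar> \<le> budget n s t A B 0"
proof -
  have "\<bar>level1_corr n s (\<lambda>_ _. c) A B\<bar> \<le> \<bar>centroid_corr n s A B\<bar>"
    using assms(5) by (simp add: level1_corr_const abs_mult mult_left_le_one_le)
  also have "\<dots> \<le> (centroid_corr n s A B)^2 / (2 * t) + t / 2"
    using assms(6) by (rule abs_le_amgm)
  also have "\<dots> \<le> budget n s t A B 0"
    unfolding budget_def using potential_ge_corr_sq[OF assms(1-4)] assms(6)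
    by (simp add: divide_right_mono)
  finally show ?thesis .
qed

lemma linform_eq_zero: "dot n c c = 0 \<Longrightarrow> linform n c = (\<lambda>_. 0)"
  unfolding dot_def linform_def fun_eq_iff by (subst (asm) sum_nonneg_eq_0_iff) auto

lemma linform_gap_sq_le:
  "(avg A0 (linform n c) - avg A1 (linform n c))^2
     \<le> dot n c c * dot n (\<lambda>i. centroid A0 i - centroid A1 i) (\<lambda>i. centroid A0 i - centroid A1 i)"
proof -
  have "avg A0 (linform n c) - avg A1 (linform n c) = dot n c (\<lambda>i. centroid A0 i - centroid A1 i)"
    by (simp add: avg_linform dot_def sum_subtractf[symmetric] algebra_simps)
  thus ?thesis
    using Cauchy_Schwarz_ineq_sum[of c _ "{..<n}"] by (simp add: dot_def power2_eq_square)
qed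

lemma unclean_split:
  assumes "finite A" "\<not> clean n A"
  shows "\<exists>A0\<subseteq>A. A0 \<noteq> {} \<and> A - A0 \<noteq> {} \<and>
    4 * binary_entropy (card A0 / card A) \<le> card A0 / card A * (1 - card A0 / card A)
      * dot n (\<lambda>i. centroid A0 i - centroid (A - A0) i) (\<lambda>i. centroid A0 i - centroid (A - A0) i)"
proof -
  obtain c where c: "var_on A (linform n c) > 16 * dot n c c"
    using assms(2) by (auto simp: clean_def not_le)
  have "dot n c c \<noteq> 0"
    using c by (auto simp: linform_eq_zero var_on_def avg_def)
  hence pos: "dot n c c > 0" using dot_self_nonneg[of n c] by linarith
  then obtain A0 where A0: "A0 \<subseteq> A" "A0 \<noteq> {}" "A - A0 \<noteq> {}"
    and gain: "4 * dot n c c * binary_entropy (card A0 / card A) \<le> card A0 / card A * (1 - card A0 / card A)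
      * (avg A0 (linform n c) - avg (A - A0) (linform n c))^2"
    using superlevel_split_var[OF assms(1) c] by blast
  define D where "D i = centroid A0 i - centroid (A - A0) i" for i
  have "card A0 / card A * (1 - card A0 / card A) * (avg A0 (linform n c) - avg (A - A0) (linform n c))^2
      \<le> card A0 / card A * (1 - card A0 / card A) * (dot n c c * dot n D D)"
    using card_fraction_bounds[OF assms(1) A0] linform_gap_sq_le[of A0 n c "A - A0"]
    unfolding D_def by (intro mult_left_mono) auto
  hence "dot n c c * (4 * binary_entropy (card A0 / card A))
      \<le> dot n c c * (card A0 / card A * (1 - card A0 / card A) * dot n D D)"
    using gain by (simp add: ac_simps)
  hence "4 * binary_entropy (card A0 / card A) \<le> card A0 / card A * (1 - card A0 / card A) * dot n D D"
    using pos by (simp only: mult_le_cancel_left_pos)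
  thus ?thesis using A0 unfolding D_def by blast
qed

lemma budget_cleanup:
  assumes B: "finite B" "B \<noteq> {}" "clean n B" and s: "\<forall>i<n. (s i)^2 = 1" and t: "t > 0"
    and clean_case: "\<And>A'. A' \<subseteq> U \<Longrightarrow> A' \<noteq> {} \<Longrightarrow> clean n A'
      \<Longrightarrow> \<bar>level1_corr n s C A' B\<bar> \<le> budget n s t A' B k"
  shows "finite A \<Longrightarrow> A \<subseteq> U \<Longrightarrow> A \<noteq> {} \<Longrightarrow> \<bar>level1_corr n s C A B\<bar> \<le> budget n s t A B k"
proof (induction A rule: finite_psubset_induct)
  case (psubset A)
  show ?case
  proof (cases "clean n A")
    case True
    thus ?thesis using clean_case psubset.prems by blast
  next
    case False
    obtain A0 where A0: "A0 \<subseteq> A" "A0 \<noteq> {}" "A - A0 \<noteq> {}"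
      and gain: "4 * binary_entropy (card A0 / card A) \<le> card A0 / card A * (1 - card A0 / card A)
        * dot n (\<lambda>i. centroid A0 i - centroid (A - A0) i) (\<lambda>i. centroid A0 i - centroid (A - A0) i)"
      using unclean_split[OF psubset.hyps(1) False] by blast
    show ?thesis
    proof (rule budget_split[OF psubset.hyps(1) A0 B s t])
      show "\<bar>level1_corr n s C A0 B\<bar> \<le> budget n s t A0 B k"
        using psubset.IH[of A0] A0 psubset.prems by auto
      show "\<bar>level1_corr n s C (A - A0) B\<bar> \<le> budget n s t (A - A0) B k"
        using psubset.IH[of "A - A0"] A0 psubset.prems by auto
    qed (use gain in \<open>simp add: algebra_simps\<close>)
  qed
qed

lemma budget_cleanup_swap:
  assumes A: "finite A" "A \<noteq> {}" "clean n A" and s: "\<forall>i<n. (s i)^2 = 1" and t: "t > 0"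
    and clean_case: "\<And>B'. B' \<subseteq> U \<Longrightarrow> B' \<noteq> {} \<Longrightarrow> clean n B'
      \<Longrightarrow> \<bar>level1_corr n s C A B'\<bar> \<le> budget n s t A B' k"
    and B: "finite B" "B \<subseteq> U" "B \<noteq> {}"
  shows "\<bar>level1_corr n s C A B\<bar> \<le> budget n s t A B k"
  using budget_cleanup[OF A s t, of U "\<lambda>y x. C x y" k, OF _ B] clean_case
  unfolding level1_corr_swap[of n s C A] budget_commute[of n s t A] by blast

lemma budget_of_clean_rectangles:
  assumes s: "\<forall>i<n. (s i)^2 = 1" and t: "t > 0"
    and clean_case: "\<And>A B. A \<subseteq> cube n \<Longrightarrow> B \<subseteq> cube n \<Longrightarrow> A \<noteq> {} \<Longrightarrow> B \<noteq> {}
      \<Longrightarrow> clean n A \<Longrightarrow> clean n B \<Longrightarrow> \<bar>level1_corr n s C A B\<bar> \<le> budget n s t A B k"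
    and A: "A \<subseteq> cube n" "A \<noteq> {}" and B: "B \<subseteq> cube n" "B \<noteq> {}" and clean: "clean n A \<or> clean n B"
  shows "\<bar>level1_corr n s C A B\<bar> \<le> budget n s t A B k"
  using clean
proof
  assume "clean n A"
  show ?thesis
    by (rule budget_cleanup_swap[OF finite_subset_cube[OF A(1)] A(2) \<open>clean n A\<close> s t _
          finite_subset_cube[OF B(1)] B])
      (use clean_case A \<open>clean n A\<close> in blast)
next
  assume "clean n B"
  show ?thesis
    by (rule budget_cleanup[OF finite_subset_cube[OF B(1)] B(2) \<open>clean n B\<close> s t _
          finite_subset_cube[OF A(1)] A])
      (use clean_case B \<open>clean n B\<close> in blast)
qed

lemma entropy_plus_cost_le:
  assumes "0 < q" "q < 1" "kl + 1 \<le> k" "kr + 1 \<le> k"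
  shows "binary_entropy q + ln 2 * (q * kl + (1 - q) * kr) \<le> ln 2 * k"
proof -
  have "ln 2 * (q * kl + (1 - q) * kr) \<le> ln 2 * (q * (k - 1) + (1 - q) * (k - 1))"
    using assms by (intro mult_left_mono add_mono) auto
  thus ?thesis using binary_entropy_le_ln2[OF assms(1,2)] by (simp add: algebra_simps)
qed

lemma budget_node:
  assumes A: "finite A" "A \<noteq> {}" and B: "finite B" "B \<noteq> {}" "clean n B"
    and s: "\<forall>i<n. (s i)^2 = 1" and t: "t > 0"
    and left: "\<And>A'. A' \<subseteq> A \<Longrightarrow> A' \<noteq> {} \<Longrightarrow> \<bar>level1_corr n s Cl A' B\<bar> \<le> budget n s t A' B kl"
    and right: "\<And>A'. A' \<subseteq> A \<Longrightarrow> A' \<noteq> {} \<Longrightarrow> \<bar>level1_corr n s Cr A' B\<bar> \<le> budget n s t A' B kr"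
    and cost: "kl + 1 \<le> k" "kr + 1 \<le> k"
  shows "\<bar>level1_corr n s (\<lambda>x y. if f x then Cl x y else Cr x y) A B\<bar> \<le> budget n s t A B k"
proof -
  define A0 where "A0 = {x\<in>A. f x}"
  let ?C = "\<lambda>x y. if f x then Cl x y else Cr x y"
  have on_A0: "level1_corr n s ?C A' B = level1_corr n s Cl A' B" if "A' \<subseteq> A0" for A'
    using that by (intro level1_corr_cong) (auto simp: A0_def)
  have on_A1: "level1_corr n s ?C A' B = level1_corr n s Cr A' B" if "A' \<subseteq> A - A0" for A'
    using that by (intro level1_corr_cong) (auto simp: A0_def)
  have mono: "budget n s t A B k' \<le> budget n s t A B k" if "k' + 1 \<le> k" for k'
    using t that by (intro budget_mono) auto
  consider "A - A0 = {}" | "A0 = {}" | "A0 \<noteq> {}" "A - A0 \<noteq> {}" by blast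
  thus ?thesis
  proof cases
    case 1
    thus ?thesis using on_A0[of A] left[of A] A mono[OF cost(1)] by auto
  next
    case 2
    thus ?thesis using on_A1[of A] right[of A] A mono[OF cost(2)] by auto
  next
    case 3
    have sub: "A0 \<subseteq> A" by (auto simp: A0_def)
    define q where "q = card A0 / card A"
    have q: "0 < q" "q < 1" using card_fraction_bounds[OF A(1) sub 3] by (simp_all add: q_def)
    have gain_nonneg: "0 \<le> q * (1 - q) * dot n D D / 4" for D
      using q dot_self_nonneg[of n D] by simp
    show ?thesis
    proof (rule budget_split[OF A(1) sub 3 B s t])
      show "\<bar>level1_corr n s ?C A0 B\<bar> \<le> budget n s t A0 B kl"
        using on_A0[of A0] left[of A0] sub 3 by simp
      show "\<bar>level1_corr n s ?C (A - A0) B\<bar> \<le> budget n s t (A - A0) B kr"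
        using on_A1[of "A - A0"] right[of "A - A0"] 3 by simp
    qed (use entropy_plus_cost_le[OF q cost] gain_nonneg[of "\<lambda>i. centroid A0 i - centroid (A - A0) i"] in
      \<open>unfold q_def[symmetric], linarith\<close>)
  qed
qed

lemma budget_node_swap:
  assumes A: "finite A" "A \<noteq> {}" "clean n A" and B: "finite B" "B \<noteq> {}"
    and s: "\<forall>i<n. (s i)^2 = 1" and t: "t > 0"
    and left: "\<And>B'. B' \<subseteq> B \<Longrightarrow> B' \<noteq> {} \<Longrightarrow> \<bar>level1_corr n s Cl A B'\<bar> \<le> budget n s t A B' kl"
    and right: "\<And>B'. B' \<subseteq> B \<Longrightarrow> B' \<noteq> {} \<Longrightarrow> \<bar>level1_corr n s Cr A B'\<bar> \<le> budget n s t A B' kr"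
    and cost: "kl + 1 \<le> k" "kr + 1 \<le> k"
  shows "\<bar>level1_corr n s (\<lambda>x y. if g y then Cl x y else Cr x y) A B\<bar> \<le> budget n s t A B k"
  using budget_node[OF B A s t, of "\<lambda>y x. Cl x y" kl "\<lambda>y x. Cr x y" kr k g] left right cost
  unfolding level1_corr_swap[of n s _ A] budget_commute[of n s t A] by blast

section \<open>Protocol trees\<close>

lemma run_ANode: "run (ANode f l r) = (\<lambda>x y. if f x then run l x y else run r x y)"
  by (simp add: fun_eq_iff)

lemma run_BNode: "run (BNode g l r) = (\<lambda>x y. if g y then run l x y else run r x y)"
  by (simp add: fun_eq_iff)

lemma budget_protocol:
  assumes s: "\<forall>i<n. (s i)^2 = 1" and t: "t > 0"
  shows "A \<subseteq> cube n \<Longrightarrow> A \<noteq> {} \<Longrightarrow> B \<subseteq> cube n \<Longrightarrow> B \<noteq> {} \<Longrightarrow> clean n A \<or> clean n B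
    \<Longrightarrow> \<bar>level1_corr n s (run P) A B\<bar> \<le> budget n s t A B (cost P)"
proof (induction P arbitrary: A B)
  case (Leaf b)
  have "run (Leaf b) = (\<lambda>_ _. if b then 1 else -1)" by (simp add: fun_eq_iff)
  thus ?case using budget_leaf[OF Leaf.prems(1,3,2,4) _ t] by simp
next
  case (ANode f l r)
  show ?case
  proof (rule budget_of_clean_rectangles[OF s t _ ANode.prems])
    fix A B assume A: "A \<subseteq> cube n" "A \<noteq> {}" and B: "B \<subseteq> cube n" "B \<noteq> {}"
      and "clean n A" "clean n B"
    show "\<bar>level1_corr n s (run (ANode f l r)) A B\<bar> \<le> budget n s t A B (cost (ANode f l r))"
      unfolding run_ANode
      by (rule budget_node[OF finite_subset_cube[OF A(1)] A(2) finite_subset_cube[OF B(1)] B(2)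
            \<open>clean n B\<close> s t, where kl = "cost l" and kr = "cost r"])
        (use ANode.IH A B \<open>clean n B\<close> in auto)
  qed
next
  case (BNode g l r)
  show ?case
  proof (rule budget_of_clean_rectangles[OF s t _ BNode.prems])
    fix A B assume A: "A \<subseteq> cube n" "A \<noteq> {}" and B: "B \<subseteq> cube n" "B \<noteq> {}"
      and "clean n A" "clean n B"
    show "\<bar>level1_corr n s (run (BNode g l r)) A B\<bar> \<le> budget n s t A B (cost (BNode g l r))"
      unfolding run_BNode
      by (rule budget_node_swap[OF finite_subset_cube[OF A(1)] A(2) \<open>clean n A\<close>
            finite_subset_cube[OF B(1)] B(2) s t, where kl = "cost l" and kr = "cost r"])
        (use BNode.IH A B \<open>clean n A\<close> in auto)
  qed
qed

lemma potential_cube: "potential n s (cube n) (cube n) = 0"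
proof -
  have "linform n (\<lambda>i. s i * centroid (cube n) i) = (\<lambda>x. 0)"
    by (simp add: linform_def fun_eq_iff centroid_cube)
  thus ?thesis
    by (simp add: potential_def centroid_corr_def cross_var_def dot_def deficiency_def
        centroid_cube card_cube var_on_def avg_def)
qed

lemma level1_corr_protocol_le:
  assumes s: "\<forall>i<n. (s i)^2 = 1" and d: "1 \<le> d" "cost P \<le> d"
  shows "\<bar>level1_corr n s (run P) (cube n) (cube n)\<bar> \<le> 8 * sqrt d"
proof -
  have sqrt_d: "sqrt d > 0" using d by simp
  have "\<bar>level1_corr n s (run P) (cube n) (cube n)\<bar> \<le> budget n s (8 * sqrt d) (cube n) (cube n) (cost P)"
    using sqrt_d by (intro budget_protocol[OF s]) (auto simp: cube_nonempty clean_cube)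
  also have "\<dots> = 4 * ln 2 * cost P / sqrt d + 4 * sqrt d"
    using sqrt_d by (simp add: budget_def potential_cube field_simps)
  also have "\<dots> \<le> 4 * d / sqrt d + 4 * sqrt d"
    using ln_le_minus_one[of 2] d sqrt_d
    by (intro add_right_mono divide_right_mono) (simp_all add: mult_mono)
  also have "\<dots> = 8 * sqrt d"
    using real_div_sqrt[of d] by simp
  finally show ?thesis .
qed

theorem theorem1p2:
  "\<exists>C::real. C > 0 \<and>
     (\<forall>n d (P::proto). n \<ge> 1 \<longrightarrow> d \<ge> 1 \<longrightarrow> cost P \<le> d \<longrightarrow>
        L1k n 1 (xor_fiber n (run P)) \<le> C * sqrt (real d))"
proof (intro exI[of _ 8] conjI allI impI)
  fix n d :: nat and P :: proto
  assume "d \<ge> 1" "cost P \<le> d"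
  obtain s where s: "\<forall>i<n. (s i)^2 = 1"
    and L: "L1k n 1 (xor_fiber n (run P)) = level1_corr n s (run P) (cube n) (cube n)"
    using L1k_xor_fiber_eq_level1_corr by blast
  show "L1k n 1 (xor_fiber n (run P)) \<le> 8 * sqrt (real d)"
    using level1_corr_protocol_le[OF s \<open>d \<ge> 1\<close> \<open>cost P \<le> d\<close>] L by simp
qed simp

end
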